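(* Let $S=\{0,s_1,\dots,s_n,1,\infty\}$ with cyclic order $0<s_1<\dots<s_n<1<\infty<0$, and for $i\in\{1,\dots,n\}$ let $\pi_i:\overline{\mathcal M}_{0,S}\to\overline{\mathcal M}_{0,\{0,s_i,1,\infty\}}=\mathbb{P}^1$ be the contraction morphism forgetting all marked points except $0,s_i,1,\infty$. Then the image under $\pi_i$ of every vertex of $B_n$ lies in $\{0,1\}$.
   Context: $\overline{\mathcal M}_{0,T}$ is the moduli space of $T$-pointed stable genus-$0$ curves; boundary divisors $D(\sigma)$ correspond to unordered stable $2$-partitions of $T$. $\overline{\mathcal M}_{0,\{0,s_i,1,\infty\}}$ is identified with $\mathbb{P}^1$ via the position of $s_i$ when the points $0,1,\infty$ are placed at $0,1,\infty$. A stable $2$-partition of $S$ is strictly ordered if one of its parts consists of cyclically consecutive elements for the given cyclic order. $B_n$ is the union of the boundary divisors $D(\sigma)$ with $\sigma$ strictly ordered (equivalently the Zariski closure of the boundary of the closure of the real simplex $\{0<t_1<\dots<t_n<1\}$ in $\overline{\mathcal M}_{0,S}(\mathbb{C})$). A vertex of $B_n$ is a point lying on $n$ distinct irreducible components of $B_n$. *)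

theory Defs
  imports Complex_Main
begin

datatype pt = Zero | Sm nat | One | Inf

definition Spts :: "nat \<Rightarrow> pt set" where
  "Spts n = {Zero, One, Inf} \<union> Sm ` {1..n}"

fun pos :: "nat \<Rightarrow> pt \<Rightarrow> nat" where
  "pos n Zero = 0"
| "pos n (Sm k) = k"
| "pos n One = n + 1"
| "pos n Inf = n + 2"

definition cyclic_interval :: "nat \<Rightarrow> pt set \<Rightarrow> bool" where
  "cyclic_interval n A \<longleftrightarrow>
     (\<exists>a < n + 3. \<exists>m. A = {x \<in> Spts n. (pos n x + (n + 3) - a) mod (n + 3) < m})"

definition stable_2partition :: "'a set \<Rightarrow> 'a set set \<Rightarrow> bool" where
  "stable_2partition T \<sigma> \<longleftrightarrow>
     (\<exists>A. A \<subseteq> T \<and> \<sigma> = {A, T - A} \<and> 2 \<le> card A \<and> 2 \<le> card (T - A))"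

definition strictly_ordered :: "nat \<Rightarrow> pt set set \<Rightarrow> bool" where
  "strictly_ordered n \<sigma> \<longleftrightarrow>
     stable_2partition (Spts n) \<sigma> \<and> (\<exists>A\<in>\<sigma>. cyclic_interval n A)"

text \<open>A T-pointed stable genus-0 curve over C is given by: a finite tree (V, E) of
  components (each a copy of P^1 = complex option, None = infinity), edges being the
  nodes; a map mark assigning each marked point its component; and for every component
  v, coordinates z v of its special points (Inl p: marked point p on v, Inr w: the node
  joining v to w), which must be pairwise distinct; stability: at least 3 special points
  on each component.\<close>

definition adj :: "'v set set \<Rightarrow> ('v \<times> 'v) set" where
  "adj E = {(a, b). {a, b} \<in> E}"

definition special :: "pt set \<Rightarrow> 'v set set \<Rightarrow> (pt \<Rightarrow> 'v) \<Rightarrow> 'v \<Rightarrow> (pt + 'v) set" where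
  "special T E mark v = Inl ` {p \<in> T. mark p = v} \<union> Inr ` {w. {v, w} \<in> E}"

definition stable_curve ::
  "pt set \<Rightarrow> 'v set \<Rightarrow> 'v set set \<Rightarrow> (pt \<Rightarrow> 'v) \<Rightarrow> ('v \<Rightarrow> pt + 'v \<Rightarrow> complex option) \<Rightarrow> bool" where
  "stable_curve T V E mark z \<longleftrightarrow>
     finite V \<and> V \<noteq> {} \<and>
     (\<forall>e\<in>E. \<exists>a b. a \<in> V \<and> b \<in> V \<and> a \<noteq> b \<and> e = {a, b}) \<and>
     (\<forall>x\<in>V. \<forall>y\<in>V. (x, y) \<in> (adj E)\<^sup>*) \<and>
     card E + 1 = card V \<and>
     mark ` T \<subseteq> V \<and>
     (\<forall>v\<in>V. 3 \<le> card (special T E mark v) \<and> inj_on (z v) (special T E mark v))"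

definition edge_parts :: "pt set \<Rightarrow> 'v set set \<Rightarrow> (pt \<Rightarrow> 'v) \<Rightarrow> 'v set \<Rightarrow> pt set set" where
  "edge_parts T E mark e = (\<lambda>v. {p \<in> T. (v, mark p) \<in> (adj (E - {e}))\<^sup>*}) ` e"

definition in_D :: "pt set \<Rightarrow> 'v set set \<Rightarrow> (pt \<Rightarrow> 'v) \<Rightarrow> pt set set \<Rightarrow> bool" where
  "in_D T E mark \<sigma> \<longleftrightarrow> (\<exists>e\<in>E. edge_parts T E mark e = \<sigma>)"

definition vertex_of_B :: "nat \<Rightarrow> 'v set set \<Rightarrow> (pt \<Rightarrow> 'v) \<Rightarrow> bool" where
  "vertex_of_B n E mark \<longleftrightarrow>
     (\<exists>\<Sigma>. finite \<Sigma> \<and> card \<Sigma> = n \<and>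
        (\<forall>\<sigma>\<in>\<Sigma>. strictly_ordered n \<sigma> \<and> in_D (Spts n) E mark \<sigma>))"

definition hc :: "complex option \<Rightarrow> complex \<times> complex" where
  "hc x = (case x of None \<Rightarrow> (1, 0) | Some a \<Rightarrow> (a, 1))"

definition det2 :: "complex \<times> complex \<Rightarrow> complex \<times> complex \<Rightarrow> complex" where
  "det2 x y = fst x * snd y - snd x * fst y"

text \<open>Image of b under the Moebius map sending a, c, d to 0, 1, infinity.\<close>
definition cross_ratio ::
  "complex option \<Rightarrow> complex option \<Rightarrow> complex option \<Rightarrow> complex option \<Rightarrow> complex option" where
  "cross_ratio a b c d =
     (let u = det2 (hc b) (hc a) * det2 (hc c) (hc d);
          w = det2 (hc b) (hc d) * det2 (hc c) (hc a)
      in if w = 0 then None else Some (u / w))"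

text \<open>Direction (special point of component v) through which the marked point p is reached.\<close>
definition dir :: "'v set set \<Rightarrow> (pt \<Rightarrow> 'v) \<Rightarrow> 'v \<Rightarrow> pt \<Rightarrow> pt + 'v" where
  "dir E mark v p =
     (if mark p = v then Inl p
      else Inr (THE w. {v, w} \<in> E \<and> (w, mark p) \<in> (adj (E - {{v, w}}))\<^sup>*))"

text \<open>pi_i on points: forget all marked points but 0, s_i, 1, infinity and stabilise;
  the result is read off as the position of s_i (None = infinity).  If a node separates
  the four points, the image is the corresponding boundary point (s_i colliding with 0,
  1 or infinity); otherwise it is the cross-ratio on the unique component where the four
  points go in pairwise distinct directions.\<close>
definition forget_value ::
  "nat \<Rightarrow> 'v set \<Rightarrow> 'v set set \<Rightarrow> (pt \<Rightarrow> 'v) \<Rightarrow> ('v \<Rightarrow> pt + 'v \<Rightarrow> complex option) \<Rightarrow> nat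
     \<Rightarrow> complex option" where
  "forget_value n V E mark z i =
     (let F = {Zero, Sm i, One, Inf};
          sep = (\<lambda>P. \<exists>e\<in>E. \<exists>X\<in>edge_parts (Spts n) E mark e. X \<inter> F = P)
      in if sep {Zero, Sm i} then Some 0
         else if sep {Sm i, One} then Some 1
         else if sep {Sm i, Inf} then None
         else (let v = (SOME v. v \<in> V \<and> inj_on (dir E mark v) F)
               in cross_ratio (z v (dir E mark v Zero)) (z v (dir E mark v (Sm i)))
                              (z v (dir E mark v One)) (z v (dir E mark v Inf))))"

end

theory Submission
  imports Defs
begin

(* Counting special points, 3 |V| <= |S| + 2 |E| = n + 3 + 2 |E| together with |V| = |E| + 1
   gives |E| <= n.  A vertex of B_n lies on n distinct strictly ordered boundary divisors, so
   its curve has exactly n nodes, each inducing a strictly ordered partition, and every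
   component carries exactly three special points.

   In such a trivalent tree some node splits F = {0, s_i, 1, infinity} two against two.
   Otherwise every side of every node contains at most one point of F, by induction on the
   size of the side: next to the node, the side consists of the two other special points of
   the adjacent component, each a marked point or a strictly smaller side, so it holds at most
   two points of F, hence at most one.  The two sides of a node would then cover only two of
   the four points.

   The part of that node which is a cyclic interval meets F in two cyclically consecutive
   points, so the node separates {0, s_i} or {s_i, 1} from the rest of F, and pi_i maps the
   curve to 0 or 1. *)

lemma sym_adj: "sym (adj E)"
  by (auto simp: sym_def adj_def insert_commute)

lemma adj_rtrancl_sym: "(a, b) \<in> (adj E)\<^sup>* \<Longrightarrow> (b, a) \<in> (adj E)\<^sup>*"
  by (meson sym_adj sym_rtrancl symD)

lemma adj_mono: "E \<subseteq> E' \<Longrightarrow> adj E \<subseteq> adj E'"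
  by (auto simp: adj_def)

lemma adj_rtrancl_mono: "E \<subseteq> E' \<Longrightarrow> (a, b) \<in> (adj E)\<^sup>* \<Longrightarrow> (a, b) \<in> (adj E')\<^sup>*"
  by (metis adj_mono rtrancl_mono subsetD)

lemma adj_rtrancl_target: "(w, x) \<in> (adj E)\<^sup>* \<Longrightarrow> x = w \<or> x \<in> \<Union>E"
  by (induction rule: rtrancl_induct) (auto simp: adj_def)

lemma adj_insert_rtrancl_cases:
  assumes "(w, x) \<in> (adj (insert {a, b} E))\<^sup>*"
  shows "(w, x) \<in> (adj E)\<^sup>* \<or> (w, a) \<in> (adj E)\<^sup>* \<or> (w, b) \<in> (adj E)\<^sup>*"
  using assms
proof (induction rule: rtrancl_induct)
  case base
  then show ?case by simp
next
  case (step y x)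
  then have "{y, x} = {a, b} \<or> (y, x) \<in> adj E"
    by (simp add: adj_def)
  then show ?case
  proof
    assume "{y, x} = {a, b}"
    then have "y = a \<or> y = b"
      by (auto simp: doubleton_eq_iff)
    with step.IH show ?thesis
      by auto
  next
    assume "(y, x) \<in> adj E"
    with step.IH show ?thesis
      by (blast intro: rtrancl_into_rtrancl)
  qed
qed

lemma adj_remove_edge_rtrancl_cases:
  assumes "(v, x) \<in> (adj (E - {{u, v}}))\<^sup>*"
  shows "x = v \<or> (\<exists>w. {v, w} \<in> E \<and> w \<noteq> u \<and> (w, x) \<in> (adj (E - {{v, w}}))\<^sup>*)"
  using assms
proof (induction rule: rtrancl_induct)
  case base
  then show ?case by simp
next
  case (step y x)
  then have yx: "{y, x} \<in> E" "{y, x} \<noteq> {u, v}"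
    by (auto simp: adj_def)
  from step.IH show ?case
  proof
    assume "y = v"
    show ?thesis
    proof (cases "x = v")
      case False
      with yx \<open>y = v\<close> have "x \<noteq> u"
        by (auto simp: insert_commute)
      with yx \<open>y = v\<close> show ?thesis
        by blast
    qed simp
  next
    assume "\<exists>w. {v, w} \<in> E \<and> w \<noteq> u \<and> (w, y) \<in> (adj (E - {{v, w}}))\<^sup>*"
    then obtain w where w: "{v, w} \<in> E" "w \<noteq> u" "(w, y) \<in> (adj (E - {{v, w}}))\<^sup>*"
      by blast
    show ?thesis
    proof (cases "{y, x} = {v, w}")
      case True
      then have "x = v \<or> x = w"
        by (auto simp: doubleton_eq_iff)
      with w show ?thesis
        by auto
    next
      case False
      with yx have "(y, x) \<in> adj (E - {{v, w}})"
        by (simp add: adj_def)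
      with w(3) have "(w, x) \<in> (adj (E - {{v, w}}))\<^sup>*"
        by (rule rtrancl_into_rtrancl)
      with w(1,2) show ?thesis
        by blast
    qed
  qed
qed

lemma bridge_reach_subset:
  assumes uv: "{u, v} \<in> E" and vw: "{v, w} \<in> E" "{v, w} \<noteq> {u, v}"
    and bridge: "(w, v) \<notin> (adj (E - {{v, w}}))\<^sup>*"
    and wx: "(w, x) \<in> (adj (E - {{v, w}}))\<^sup>*"
  shows "(v, x) \<in> (adj (E - {{u, v}}))\<^sup>*"
proof -
  let ?E' = "E - {{v, w}} - {{u, v}}"
  have "E - {{v, w}} = insert {u, v} ?E'"
    using uv vw(2) by auto
  with wx have "(w, x) \<in> (adj ?E')\<^sup>* \<or> (w, u) \<in> (adj ?E')\<^sup>* \<or> (w, v) \<in> (adj ?E')\<^sup>*"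
    using adj_insert_rtrancl_cases[of w x u v ?E'] by simp
  moreover have "(w, u) \<notin> (adj ?E')\<^sup>*"
  proof
    assume "(w, u) \<in> (adj ?E')\<^sup>*"
    then have "(w, u) \<in> (adj (E - {{v, w}}))\<^sup>*"
      using adj_rtrancl_mono[of ?E' "E - {{v, w}}"] by blast
    moreover have "(u, v) \<in> adj (E - {{v, w}})"
      using uv vw(2) by (auto simp: adj_def)
    ultimately show False
      using bridge by (meson rtrancl_into_rtrancl)
  qed
  moreover have "(w, v) \<notin> (adj ?E')\<^sup>*"
    using bridge adj_rtrancl_mono[of ?E' "E - {{v, w}}"] by blast
  ultimately have "(w, x) \<in> (adj (E - {{u, v}}))\<^sup>*"
    using adj_rtrancl_mono[of ?E' "E - {{u, v}}"] by blast
  moreover have "(v, w) \<in> adj (E - {{u, v}})"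
    using vw by (auto simp: adj_def)
  ultimately show ?thesis
    by (rule converse_rtrancl_into_rtrancl[rotated])
qed

definition side :: "'a set \<Rightarrow> 'v set set \<Rightarrow> ('a \<Rightarrow> 'v) \<Rightarrow> 'v set \<Rightarrow> 'v \<Rightarrow> 'a set" where
  "side T E mark e v = {p \<in> T. (v, mark p) \<in> (adj (E - {e}))\<^sup>*}"

lemma edge_parts_side: "edge_parts T E mark e = side T E mark e ` e"
  by (simp add: edge_parts_def side_def)

lemma stable_2partition_edge_bridge:
  assumes "stable_2partition T (edge_parts T E mark {v, w})"
  shows "(w, v) \<notin> (adj (E - {{v, w}}))\<^sup>*"
proof
  assume wv: "(w, v) \<in> (adj (E - {{v, w}}))\<^sup>*"
  then have "side T E mark {v, w} w = side T E mark {v, w} v"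
    by (auto simp: side_def dest: adj_rtrancl_sym intro: rtrancl_trans)
  then have "edge_parts T E mark {v, w} = {side T E mark {v, w} v}"
    by (simp add: edge_parts_side)
  moreover obtain A where "A \<subseteq> T" "edge_parts T E mark {v, w} = {A, T - A}" "2 \<le> card A"
    using assms by (auto simp: stable_2partition_def)
  ultimately have "A = T - A" "A \<noteq> {}"
    by auto
  then show False
    by blast
qed

lemma stable_curve_edgeE:
  assumes "stable_curve T V E mark z" "e \<in> E"
  obtains a b where "a \<in> V" "b \<in> V" "a \<noteq> b" "e = {a, b}"
  using assms unfolding stable_curve_def by metis

lemma stable_curve_edge_subset: "stable_curve T V E mark z \<Longrightarrow> e \<in> E \<Longrightarrow> e \<subseteq> V"
  by (metis stable_curve_edgeE empty_subsetI insert_subset)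

lemma stable_curve_finite_edges: "stable_curve T V E mark z \<Longrightarrow> finite E"
  by (metis Pow_iff finite_Pow_iff finite_subset stable_curve_def stable_curve_edge_subset subsetI)

lemma stable_curve_finite_neighbours:
  assumes "stable_curve T V E mark z"
  shows "finite {w. {v, w} \<in> E}"
proof (rule finite_subset)
  show "{w. {v, w} \<in> E} \<subseteq> V"
    using stable_curve_edge_subset[OF assms] by blast
  show "finite V"
    using assms by (simp add: stable_curve_def)
qed

lemma stable_curve_sides_cover:
  assumes sc: "stable_curve T V E mark z" and ab: "{a, b} \<in> E"
  shows "side T E mark {a, b} a \<union> side T E mark {a, b} b = T"
proof -
  have "p \<in> side T E mark {a, b} a \<union> side T E mark {a, b} b" if p: "p \<in> T" for p
  proof -
    have "a \<in> V"
      using stable_curve_edge_subset[OF sc ab] by blast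
    moreover have "mark p \<in> V"
      using sc p by (auto simp: stable_curve_def)
    ultimately have "(mark p, a) \<in> (adj (insert {a, b} (E - {{a, b}})))\<^sup>*"
      using sc ab by (simp add: stable_curve_def insert_absorb)
    then have "(mark p, a) \<in> (adj (E - {{a, b}}))\<^sup>* \<or> (mark p, b) \<in> (adj (E - {{a, b}}))\<^sup>*"
      using adj_insert_rtrancl_cases by fastforce
    with p show ?thesis
      by (auto simp: side_def dest: adj_rtrancl_sym)
  qed
  then show ?thesis
    by (auto simp: side_def)
qed

lemma card_special:
  assumes "finite T" "finite {w. {v, w} \<in> E}"
  shows "card (special T E mark v) = card {p \<in> T. mark p = v} + card {w. {v, w} \<in> E}"
  unfolding special_def using assms
  by (subst card_Un_disjoint) (auto simp: card_image)

lemma card_edges_at: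
  assumes "\<forall>e\<in>E. \<exists>a b. e = {a, b}"
  shows "card {w. {v, w} \<in> E} = card {e \<in> E. v \<in> e}"
proof -
  have "e \<in> (\<lambda>w. {v, w}) ` {w. {v, w} \<in> E}" if "e \<in> E" "v \<in> e" for e
  proof -
    obtain a b where "e = {a, b}"
      using assms \<open>e \<in> E\<close> by blast
    with \<open>v \<in> e\<close> have "e = {v, if v = a then b else a}"
      by auto
    with \<open>e \<in> E\<close> show ?thesis
      by auto
  qed
  then have "{e \<in> E. v \<in> e} = (\<lambda>w. {v, w}) ` {w. {v, w} \<in> E}"
    by auto
  moreover have "inj_on (\<lambda>w. {v, w}) {w. {v, w} \<in> E}"
    by (auto simp: inj_on_def doubleton_eq_iff)
  ultimately show ?thesis
    by (simp add: card_image)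
qed

lemma sum_card_special:
  assumes sc: "stable_curve T V E mark z" and T: "finite T"
  shows "(\<Sum>v\<in>V. card (special T E mark v)) = card T + 2 * card E"
proof -
  have V: "finite V" "mark ` T \<subseteq> V" and edges: "\<forall>e\<in>E. \<exists>a b. a \<in> V \<and> b \<in> V \<and> a \<noteq> b \<and> e = {a, b}"
    using sc by (auto simp: stable_curve_def)
  have "(\<Sum>v\<in>V. card {p \<in> T. mark p = v}) = 1 * card T"
  proof (rule sum_multicount[OF V(1) T])
    have "{v \<in> V. mark p = v} = {mark p}" if "p \<in> T" for p
      using V(2) that by auto
    then show "\<forall>p\<in>T. card {v \<in> V. mark p = v} = 1"
      by simp
  qed
  moreover have "(\<Sum>v\<in>V. card {e \<in> E. v \<in> e}) = 2 * card E"
  proof (rule sum_multicount[OF V(1) stable_curve_finite_edges[OF sc]])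
    show "\<forall>e\<in>E. card {v \<in> V. v \<in> e} = 2"
      using edges by (fastforce simp: Collect_conj_eq Int_absorb1)
  qed
  moreover have "card {w. {v, w} \<in> E} = card {e \<in> E. v \<in> e}" for v
    using edges by (intro card_edges_at) blast
  ultimately show ?thesis
    using stable_curve_finite_neighbours[OF sc] T
    by (simp add: card_special sum.distrib)
qed

lemma stable_curve_card_edges_le:
  assumes sc: "stable_curve T V E mark z" and "finite T"
  shows "card E + 3 \<le> card T"
proof -
  have "3 * card V = (\<Sum>v\<in>V. 3)"
    by simp
  also have "\<dots> \<le> (\<Sum>v\<in>V. card (special T E mark v))"
    using sc by (intro sum_mono) (simp add: stable_curve_def)
  finally show ?thesis
    using sc sum_card_special[OF assms] by (simp add: stable_curve_def)
qed

lemma stable_curve_trivalent: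
  assumes sc: "stable_curve T V E mark z" and "finite T" and "card T = card E + 3" and "v \<in> V"
  shows "card (special T E mark v) = 3"
proof -
  have sum_eq: "(\<Sum>v\<in>V. 3) = (\<Sum>v\<in>V. card (special T E mark v))"
    using assms sum_card_special[OF sc] by (simp add: stable_curve_def)
  have stable: "\<And>u. u \<in> V \<Longrightarrow> 3 \<le> card (special T E mark u)"
    using sc by (simp add: stable_curve_def)
  have "finite V"
    using sc by (simp add: stable_curve_def)
  then have "3 = card (special T E mark v)"
    using sum_mono_inv[OF sum_eq stable \<open>v \<in> V\<close>] by simp
  then show ?thesis
    by simp
qed

lemma trivalent_side_inter_card_le_1:
  assumes sc: "stable_curve T V E mark z" and T: "finite T"
    and trivalent: "\<And>v. v \<in> V \<Longrightarrow> card (special T E mark v) = 3"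
    and bridges: "\<And>v w. {v, w} \<in> E \<Longrightarrow> (w, v) \<notin> (adj (E - {{v, w}}))\<^sup>*"
    and no_half: "\<And>e x. e \<in> E \<Longrightarrow> x \<in> e \<Longrightarrow> card (side T E mark e x \<inter> F) \<noteq> 2"
    and uv: "{u, v} \<in> E"
  shows "card (side T E mark {u, v} v \<inter> F) \<le> 1"
  using uv
proof (induction "card {x. (v, x) \<in> (adj (E - {{u, v}}))\<^sup>*}" arbitrary: u v rule: less_induct)
  case less
  define N where "N = {w. {v, w} \<in> E \<and> w \<noteq> u}"
  have "v \<in> V" "finite V"
    using sc stable_curve_edge_subset[OF sc less.prems] by (auto simp: stable_curve_def)
  have "x \<in> V" if "(v, x) \<in> (adj (E - {{u, v}}))\<^sup>*" for x
    using adj_rtrancl_target[OF that] \<open>v \<in> V\<close> stable_curve_edge_subset[OF sc] by blast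
  then have "{x. (v, x) \<in> (adj (E - {{u, v}}))\<^sup>*} \<subseteq> V"
    by blast
  then have reach_finite: "finite {x. (v, x) \<in> (adj (E - {{u, v}}))\<^sup>*}"
    using \<open>finite V\<close> by (rule finite_subset)
  have branch: "card (side T E mark {v, w} w \<inter> F) \<le> 1" if "w \<in> N" for w
  proof -
    have vw: "{v, w} \<in> E" "{v, w} \<noteq> {u, v}"
      using that by (auto simp: N_def doubleton_eq_iff)
    have "{x. (w, x) \<in> (adj (E - {{v, w}}))\<^sup>*} \<subseteq> {x. (v, x) \<in> (adj (E - {{u, v}}))\<^sup>*}"
      using bridge_reach_subset[OF less.prems vw bridges[OF vw(1)]] by blast
    moreover have "v \<notin> {x. (w, x) \<in> (adj (E - {{v, w}}))\<^sup>*}"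
      using bridges[OF vw(1)] by simp
    ultimately have "{x. (w, x) \<in> (adj (E - {{v, w}}))\<^sup>*} \<subset> {x. (v, x) \<in> (adj (E - {{u, v}}))\<^sup>*}"
      by blast
    with reach_finite have "card {x. (w, x) \<in> (adj (E - {{v, w}}))\<^sup>*}
        < card {x. (v, x) \<in> (adj (E - {{u, v}}))\<^sup>*}"
      by (rule psubset_card_mono)
    then show ?thesis
      using vw(1) by (rule less.hyps)
  qed
  have finite_N: "finite N"
    using stable_curve_finite_neighbours[OF sc, of v] by (simp add: N_def)
  have "side T E mark {u, v} v \<inter> F
      \<subseteq> {p \<in> T. mark p = v} \<union> (\<Union>w\<in>N. (side T E mark {v, w} w \<inter> F))"
  proof
    fix p
    assume "p \<in> side T E mark {u, v} v \<inter> F"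
    then have p: "p \<in> T" "p \<in> F" and "(v, mark p) \<in> (adj (E - {{u, v}}))\<^sup>*"
      by (auto simp: side_def)
    from adj_remove_edge_rtrancl_cases[OF this(3)] p
    show "p \<in> {p \<in> T. mark p = v} \<union> (\<Union>w\<in>N. (side T E mark {v, w} w \<inter> F))"
      by (auto simp: side_def N_def)
  qed
  then have "card (side T E mark {u, v} v \<inter> F)
      \<le> card ({p \<in> T. mark p = v} \<union> (\<Union>w\<in>N. (side T E mark {v, w} w \<inter> F)))"
    by (intro card_mono finite_subset[OF _ T]) (auto simp: side_def)
  also have "\<dots> \<le> card {p \<in> T. mark p = v} + (\<Sum>w\<in>N. card (side T E mark {v, w} w \<inter> F))"
    by (rule order_trans[OF card_Un_le add_left_mono[OF card_UN_le[OF finite_N]]])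
  also have "(\<Sum>w\<in>N. card (side T E mark {v, w} w \<inter> F)) \<le> (\<Sum>w\<in>N. 1)"
    by (rule sum_mono) (rule branch)
  also have "card {p \<in> T. mark p = v} + (\<Sum>w\<in>N. 1) = 2"
  proof -
    have "{w. {v, w} \<in> E} = insert u N" "u \<notin> N"
      using less.prems by (auto simp: N_def insert_commute)
    then show ?thesis
      using trivalent[OF \<open>v \<in> V\<close>] card_special[OF T stable_curve_finite_neighbours[OF sc]] finite_N
      by simp
  qed
  moreover have "card (side T E mark {u, v} v \<inter> F) \<noteq> 2"
    using no_half[OF less.prems] by simp
  ultimately show ?case
    by linarith
qed

lemma trivalent_exists_edge_part_inter_card_2:
  assumes sc: "stable_curve T V E mark z" and T: "finite T"
    and trivalent: "\<And>v. v \<in> V \<Longrightarrow> card (special T E mark v) = 3"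
    and bridges: "\<And>v w. {v, w} \<in> E \<Longrightarrow> (w, v) \<notin> (adj (E - {{v, w}}))\<^sup>*"
    and "E \<noteq> {}" and F: "F \<subseteq> T" "card F = 4"
  shows "\<exists>e\<in>E. \<exists>X\<in>edge_parts T E mark e. card (X \<inter> F) = 2"
proof (rule ccontr)
  assume "\<not> ?thesis"
  then have no_half: "\<And>e x. e \<in> E \<Longrightarrow> x \<in> e \<Longrightarrow> card (side T E mark e x \<inter> F) \<noteq> 2"
    by (auto simp: edge_parts_side)
  obtain e where "e \<in> E"
    using \<open>E \<noteq> {}\<close> by blast
  then obtain a b where ab: "{a, b} \<in> E"
    using stable_curve_edgeE[OF sc] by metis
  have "card (side T E mark {a, b} b \<inter> F) \<le> 1"
    by (rule trivalent_side_inter_card_le_1[OF sc T trivalent bridges no_half ab])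
  moreover have "card (side T E mark {a, b} a \<inter> F) \<le> 1"
    using trivalent_side_inter_card_le_1[OF sc T trivalent bridges no_half, of b a] ab
    by (simp add: insert_commute)
  moreover have "F = (side T E mark {a, b} a \<inter> F) \<union> (side T E mark {a, b} b \<inter> F)"
    using stable_curve_sides_cover[OF sc ab] F(1) by auto
  then have "card F \<le> card (side T E mark {a, b} a \<inter> F) + card (side T E mark {a, b} b \<inter> F)"
    by (metis card_Un_le)
  ultimately show False
    using F(2) by simp
qed

lemma finite_Spts: "finite (Spts n)"
  by (simp add: Spts_def)

lemma card_Spts: "card (Spts n) = n + 3"
proof -
  have "card (Sm ` {1..n}) = n"
    by (simp add: card_image inj_on_def)
  moreover have "{Zero, One, Inf} \<inter> Sm ` {1..n} = {}"
    by auto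
  ultimately show ?thesis
    by (simp add: Spts_def card_Un_disjoint)
qed

lemma vertex_of_B_edges:
  assumes sc: "stable_curve (Spts n) V E mark z" and "vertex_of_B n E mark"
  shows "card E = n" and "\<And>e. e \<in> E \<Longrightarrow> strictly_ordered n (edge_parts (Spts n) E mark e)"
proof -
  obtain \<Sigma> where \<Sigma>: "card \<Sigma> = n" "\<forall>\<sigma>\<in>\<Sigma>. strictly_ordered n \<sigma> \<and> in_D (Spts n) E mark \<sigma>"
    using assms(2) by (auto simp: vertex_of_B_def)
  have sub: "\<Sigma> \<subseteq> edge_parts (Spts n) E mark ` E"
    using \<Sigma>(2) by (auto simp: in_D_def)
  have fin: "finite (edge_parts (Spts n) E mark ` E)"
    using stable_curve_finite_edges[OF sc] by simp
  have "n \<le> card (edge_parts (Spts n) E mark ` E)"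
    using card_mono[OF fin sub] \<Sigma>(1) by simp
  moreover have "card (edge_parts (Spts n) E mark ` E) \<le> card E"
    using stable_curve_finite_edges[OF sc] by (rule card_image_le)
  moreover have "card E \<le> n"
    using stable_curve_card_edges_le[OF sc finite_Spts] by (simp add: card_Spts)
  ultimately have "card (edge_parts (Spts n) E mark ` E) = n" "card E = n"
    by linarith+
  then show "card E = n"
    by simp
  have "\<Sigma> = edge_parts (Spts n) E mark ` E"
    using card_subset_eq[OF fin sub] \<Sigma>(1) \<open>card (edge_parts (Spts n) E mark ` E) = n\<close> by simp
  with \<Sigma>(2) show "strictly_ordered n (edge_parts (Spts n) E mark e)" if "e \<in> E" for e
    using that by blast
qed

lemma add_diff_mod_if:
  fixes x a N :: nat
  assumes "x < N" "a < N"
  shows "(x + N - a) mod N = (if a \<le> x then x - a else x + N - a)"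
proof (cases "a \<le> x")
  case True
  then have "x + N - a = (x - a) + N"
    by simp
  then show ?thesis
    using True assms(1) by (metis mod_add_self2 mod_less less_imp_diff_less)
qed (use assms in simp)

lemma cyclic_interval_not_interleaved:
  assumes B: "cyclic_interval n B"
    and x: "x1 \<in> Spts n" "x2 \<in> Spts n" "x3 \<in> Spts n" "x4 \<in> Spts n"
    and pos: "pos n x1 < pos n x2" "pos n x2 < pos n x3" "pos n x3 < pos n x4"
    and "x1 \<in> B \<longleftrightarrow> x3 \<in> B" "x2 \<in> B \<longleftrightarrow> x4 \<in> B"
  shows "x1 \<in> B \<longleftrightarrow> x2 \<in> B"
proof -
  obtain a m where a: "a < n + 3" and B_eq: "B = {x \<in> Spts n. (pos n x + (n + 3) - a) mod (n + 3) < m}"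
    using B by (auto simp: cyclic_interval_def)
  have pos_less: "pos n x < n + 3" if "x \<in> Spts n" for x
    using that by (auto simp: Spts_def)
  have mem: "x \<in> B \<longleftrightarrow> (if a \<le> pos n x then pos n x - a else pos n x + (n + 3) - a) < m"
    if "x \<in> Spts n" for x
    using that a pos_less[OF that] by (simp add: B_eq add_diff_mod_if)
  show ?thesis
    using assms(9,10) pos pos_less[OF x(4)] mem[OF x(1)] mem[OF x(2)] mem[OF x(3)] mem[OF x(4)]
    by (auto split: if_splits)
qed

lemma strictly_ordered_separates_Sm:
  assumes so: "strictly_ordered n \<sigma>" and i: "i \<in> {1..n}"
    and X: "X \<in> \<sigma>" "card (X \<inter> {Zero, Sm i, One, Inf}) = 2"
  shows "\<exists>Y\<in>\<sigma>. Y \<inter> {Zero, Sm i, One, Inf} = {Zero, Sm i} \<or> Y \<inter> {Zero, Sm i, One, Inf} = {Sm i, One}"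
proof -
  define F where "F = {Zero, Sm i, One, Inf}"
  have F: "F \<subseteq> Spts n" "finite F" "card F = 4"
    using i by (auto simp: F_def Spts_def)
  obtain A where A: "A \<subseteq> Spts n" "\<sigma> = {A, Spts n - A}"
    using so by (auto simp: strictly_ordered_def stable_2partition_def)
  obtain B where B: "B \<in> \<sigma>" "cyclic_interval n B"
    using so by (auto simp: strictly_ordered_def)
  have complement: "card ((Spts n - Y) \<inter> F) = 4 - card (Y \<inter> F)" for Y
  proof -
    have "(Spts n - Y) \<inter> F = F - Y \<inter> F"
      using F(1) by blast
    then show ?thesis
      using F by (simp add: card_Diff_subset)
  qed
  have half: "card (Y \<inter> F) = 2" if "Y \<in> \<sigma>" for Y
    using X that complement[of A] complement[of "Spts n - A"] A
    by (auto simp: F_def Diff_Diff_Int Int_absorb1)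
  define Y where "Y = (if Sm i \<in> B then B else Spts n - B)"
  have Y: "Y \<in> \<sigma>" "Sm i \<in> Y"
    using A B F(1) by (auto simp: Y_def F_def)
  have "Zero \<in> B \<longleftrightarrow> One \<in> B \<Longrightarrow> Sm i \<in> B \<longleftrightarrow> Inf \<in> B \<Longrightarrow> Zero \<in> B \<longleftrightarrow> Sm i \<in> B"
    by (rule cyclic_interval_not_interleaved[OF B(2)]) (use F(1) i in \<open>auto simp: F_def\<close>)
  moreover have "x \<in> Y \<longleftrightarrow> (x \<in> B \<longleftrightarrow> Sm i \<in> B)" if "x \<in> F" for x
    using that F(1) by (auto simp: Y_def)
  then have "Zero \<in> Y \<longleftrightarrow> (Zero \<in> B \<longleftrightarrow> Sm i \<in> B)" "One \<in> Y \<longleftrightarrow> (One \<in> B \<longleftrightarrow> Sm i \<in> B)"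
    "Inf \<in> Y \<longleftrightarrow> (Inf \<in> B \<longleftrightarrow> Sm i \<in> B)"
    by (simp_all add: F_def)
  ultimately have "Zero \<in> Y \<longleftrightarrow> One \<in> Y \<Longrightarrow> Sm i \<in> Y \<longleftrightarrow> Inf \<in> Y \<Longrightarrow> Zero \<in> Y \<longleftrightarrow> Sm i \<in> Y"
    using Y(2) by blast
  then have "Y \<inter> F = {Zero, Sm i} \<or> Y \<inter> F = {Sm i, One}"
    using half[OF Y(1)] Y(2)
    by (cases "Zero \<in> Y"; cases "One \<in> Y"; cases "Inf \<in> Y") (auto simp: F_def insert_commute)
  with Y(1) show ?thesis
    by (auto simp: F_def)
qed

lemma forget_value_separated:
  assumes "e \<in> E" "Y \<in> edge_parts (Spts n) E mark e"
    and "Y \<inter> {Zero, Sm i, One, Inf} = {Zero, Sm i} \<or> Y \<inter> {Zero, Sm i, One, Inf} = {Sm i, One}"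
  shows "forget_value n V E mark z i \<in> {Some 0, Some 1}"
  using assms unfolding forget_value_def Let_def by auto

theorem proposition2p7:
  fixes n i :: nat and V :: "'v set" and E :: "'v set set"
    and mark :: "pt \<Rightarrow> 'v" and z :: "'v \<Rightarrow> pt + 'v \<Rightarrow> complex option"
  assumes "i \<in> {1..n}"
    and "stable_curve (Spts n) V E mark z"
    and "vertex_of_B n E mark"
  shows "forget_value n V E mark z i \<in> {Some 0, Some 1}"
proof -
  let ?F = "{Zero, Sm i, One, Inf}"
  note sc = assms(2)
  have card_E: "card E = n"
    and so: "\<And>e. e \<in> E \<Longrightarrow> strictly_ordered n (edge_parts (Spts n) E mark e)"
    using vertex_of_B_edges[OF sc assms(3)] by auto
  have trivalent: "\<And>v. v \<in> V \<Longrightarrow> card (special (Spts n) E mark v) = 3"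
    using stable_curve_trivalent[OF sc finite_Spts] card_E by (simp add: card_Spts)
  have bridges: "(w, v) \<notin> (adj (E - {{v, w}}))\<^sup>*" if "{v, w} \<in> E" for v w
  proof (rule stable_2partition_edge_bridge)
    show "stable_2partition (Spts n) (edge_parts (Spts n) E mark {v, w})"
      using so[OF that] by (simp add: strictly_ordered_def)
  qed
  have "E \<noteq> {}"
    using card_E assms(1) by auto
  moreover have "?F \<subseteq> Spts n" "card ?F = 4"
    using assms(1) by (auto simp: Spts_def)
  ultimately obtain e X where "e \<in> E" "X \<in> edge_parts (Spts n) E mark e" "card (X \<inter> ?F) = 2"
    using trivalent_exists_edge_part_inter_card_2[OF sc finite_Spts trivalent bridges] by blast
  then obtain Y where "Y \<in> edge_parts (Spts n) E mark e"
    "Y \<inter> ?F = {Zero, Sm i} \<or> Y \<inter> ?F = {Sm i, One}"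
    using strictly_ordered_separates_Sm[OF so assms(1)] by blast
  with \<open>e \<in> E\<close> show ?thesis
    by (rule forget_value_separated)
qed

end
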